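(* Let $\lambda=\inf\{u : |\mathrm{GHZ}\rangle^{\otimes\lfloor un\rfloor}\stackrel{\textrm{SLOCC}}{\longrightarrow}|\Phi^3\rangle^{\otimes n}\text{ for all sufficiently large } n\}$. Then $\lambda=\omega$, the exponent of matrix multiplication, i.e. the smallest real number $\omega$ such that two $N\times N$ matrices can be multiplied using $O(N^{\omega})$ multiplications, each being a product of a linear function of the entries of the first matrix and a linear function of the entries of the second matrix.
   Context: Three parties $A,B,C$. $|\mathrm{GHZ}\rangle=\frac{1}{\sqrt2}(|000\rangle+|111\rangle)$ with one qubit held by each party. Let $|\Phi\rangle=|00\rangle+|11\rangle$. $|\Phi^3\rangle=|\Phi\rangle_{AB}|\Phi\rangle_{AC}|\Phi\rangle_{BC}$ is the state in which each pair of parties shares one EPR state (each party holds two qubits). Tensor powers are taken with each party holding its own parts of all copies. $|\psi\rangle\stackrel{\textrm{SLOCC}}{\longrightarrow}|\phi\rangle$ means $|\psi\rangle$ can be transformed into $|\phi\rangle$ with nonzero probability by local operations and classical communication; equivalently, there exist linear operators $A,B,C$ on the respective parties' spaces with $(A\otimes B\otimes C)|\psi\rangle=|\phi\rangle$ up to a nonzero scalar. *)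

theory Defs
  imports Complex_Main
begin

text \<open>A (pure, unnormalised-allowed) tripartite state is given by its amplitude
function on computational basis indices, together with the finite sets of
local basis indices of the parties A, B, C.\<close>

definition slocc ::
  "'a set \<Rightarrow> 'b set \<Rightarrow> 'c set \<Rightarrow> ('a \<Rightarrow> 'b \<Rightarrow> 'c \<Rightarrow> complex) \<Rightarrow>
   'd set \<Rightarrow> 'e set \<Rightarrow> 'f set \<Rightarrow> ('d \<Rightarrow> 'e \<Rightarrow> 'f \<Rightarrow> complex) \<Rightarrow> bool" where
  "slocc IA IB IC psi JA JB JC phi \<longleftrightarrow>
     (\<exists>(MA :: 'd \<Rightarrow> 'a \<Rightarrow> complex) (MB :: 'e \<Rightarrow> 'b \<Rightarrow> complex) (MC :: 'f \<Rightarrow> 'c \<Rightarrow> complex) s.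
        s \<noteq> 0 \<and>
        (\<forall>x\<in>JA. \<forall>y\<in>JB. \<forall>z\<in>JC.
           (\<Sum>a\<in>IA. \<Sum>b\<in>IB. \<Sum>c\<in>IC. MA x a * MB y b * MC z c * psi a b c) = s * phi x y z))"

text \<open>Tensor power: n copies, each party holds its own parts of all copies;
a local basis index is a list of length n of single-copy local indices.\<close>
definition pow_idx :: "'a set \<Rightarrow> nat \<Rightarrow> 'a list set" where
  "pow_idx I n = {xs. length xs = n \<and> set xs \<subseteq> I}"

definition tpow :: "('a \<Rightarrow> 'b \<Rightarrow> 'c \<Rightarrow> complex) \<Rightarrow> nat \<Rightarrow>
    'a list \<Rightarrow> 'b list \<Rightarrow> 'c list \<Rightarrow> complex" where
  "tpow psi n xs ys zs = (\<Prod>i<n. psi (xs ! i) (ys ! i) (zs ! i))"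

definition qubit :: "nat set" where "qubit = {0, 1}"

definition GHZ :: "nat \<Rightarrow> nat \<Rightarrow> nat \<Rightarrow> complex" where
  "GHZ a b c = (if a = b \<and> b = c then complex_of_real (1 / sqrt 2) else 0)"

text \<open>Phi^3 = Phi_AB Phi_AC Phi_BC with Phi = |00> + |11>.
A holds (its AB qubit, its AC qubit), B holds (its AB qubit, its BC qubit),
C holds (its AC qubit, its BC qubit).\<close>
definition Phi3 :: "nat \<times> nat \<Rightarrow> nat \<times> nat \<Rightarrow> nat \<times> nat \<Rightarrow> complex" where
  "Phi3 a b c = (if fst a = fst b \<and> snd a = fst c \<and> snd b = snd c then 1 else 0)"

definition GHZ_pow_to_Phi3_pow :: "nat \<Rightarrow> nat \<Rightarrow> bool" where
  "GHZ_pow_to_Phi3_pow m n \<longleftrightarrow>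
     slocc (pow_idx qubit m) (pow_idx qubit m) (pow_idx qubit m) (tpow GHZ m)
           (pow_idx (qubit \<times> qubit) n) (pow_idx (qubit \<times> qubit) n)
           (pow_idx (qubit \<times> qubit) n) (tpow Phi3 n)"

definition lambda_GHZ :: real where
  "lambda_GHZ = Inf {u :: real. \<exists>N0. \<forall>n\<ge>N0. GHZ_pow_to_Phi3_pow (nat \<lfloor>u * real n\<rfloor>) n}"

definition bilinear_mm_algo :: "nat \<Rightarrow> nat \<Rightarrow> bool" where
  "bilinear_mm_algo N r \<longleftrightarrow>
     (\<exists>(u :: nat \<Rightarrow> nat \<Rightarrow> nat \<Rightarrow> complex) (v :: nat \<Rightarrow> nat \<Rightarrow> nat \<Rightarrow> complex)
        (w :: nat \<Rightarrow> nat \<Rightarrow> nat \<Rightarrow> complex).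
       \<forall>(X :: nat \<Rightarrow> nat \<Rightarrow> complex) (Y :: nat \<Rightarrow> nat \<Rightarrow> complex). \<forall>i<N. \<forall>k<N.
         (\<Sum>j<N. X i j * Y j k) =
         (\<Sum>l<r. w l i k * (\<Sum>a<N. \<Sum>b<N. u l a b * X a b)
                           * (\<Sum>a<N. \<Sum>b<N. v l a b * Y a b)))"

definition omega_mm :: real where
  "omega_mm = Inf {tau :: real. \<exists>C N0. \<forall>N\<ge>N0. \<exists>r. bilinear_mm_algo N r \<and>
                     real r \<le> C * real N powr tau}"

end

theory Submission
  imports Defs
begin

text \<open>The m-th tensor power of GHZ is, up to a scalar, the unit tensor of rank 2^m, and
the n-th tensor power of Phi3 is the structure tensor of 2^n by 2^n matrix multiplication
once A's two qubit strings are read as the column and row index of X, B's as the row and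
column index of Y, and C's as the row and column index of XY. An SLOCC conversion of the first
into the second is therefore exactly a decomposition of that tensor into 2^m rank-one terms,
i.e. a bilinear algorithm with 2^m multiplications. The two infima then agree because
restricting the matrix size to powers of two changes the number of multiplications only by a
constant factor.\<close>

text \<open>The matrix multiplication tensor has rank at most r: entry (a, b) of X, entry (c, d) of Y
and entry (i, k) of XY interact exactly when a = i, b = c and d = k.\<close>

definition mm_rank_le :: "nat \<Rightarrow> nat \<Rightarrow> bool" where
  "mm_rank_le N r \<longleftrightarrow>
     (\<exists>(u :: nat \<Rightarrow> nat \<Rightarrow> nat \<Rightarrow> complex) (v :: nat \<Rightarrow> nat \<Rightarrow> nat \<Rightarrow> complex)
        (w :: nat \<Rightarrow> nat \<Rightarrow> nat \<Rightarrow> complex).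
       \<forall>a<N. \<forall>b<N. \<forall>c<N. \<forall>d<N. \<forall>i<N. \<forall>k<N.
         (if a = i \<and> b = c \<and> d = k then 1 else 0) = (\<Sum>l<r. w l i k * u l a b * v l c d))"

subsection \<open>Bilinear algorithms and the rank of the matrix multiplication tensor\<close>

lemma sum_sum_mult_indicator:
  fixes f :: "nat \<Rightarrow> nat \<Rightarrow> 'a :: comm_ring_1"
  assumes "a < N" "b < N"
  shows "(\<Sum>x<N. \<Sum>y<N. f x y * (if x = a \<and> y = b then 1 else 0)) = f a b"
proof -
  have "(\<Sum>x<N. \<Sum>y<N. f x y * (if x = a \<and> y = b then 1 else 0))
       = (\<Sum>x<N. if x = a then (\<Sum>y<N. f x y * (if y = b then 1 else 0)) else 0)"
    by (rule sum.cong) auto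
  also have "\<dots> = (\<Sum>y<N. f a y * (if y = b then 1 else 0))"
    using assms by (simp add: sum.delta)
  also have "\<dots> = f a b"
    using assms by (simp add: sum.delta if_distrib cong: if_cong)
  finally show ?thesis .
qed

lemma mm_rank_le_if_bilinear_mm_algo:
  assumes "bilinear_mm_algo N r"
  shows "mm_rank_le N r"
proof -
  obtain u v w :: "nat \<Rightarrow> nat \<Rightarrow> nat \<Rightarrow> complex" where algo: "\<And>X Y i k. i < N \<Longrightarrow> k < N \<Longrightarrow>
      (\<Sum>j<N. X i j * Y j k) =
      (\<Sum>l<r. w l i k * (\<Sum>a<N. \<Sum>b<N. u l a b * X a b) * (\<Sum>a<N. \<Sum>b<N. v l a b * Y a b))"
    using assms unfolding bilinear_mm_algo_def by blast
  have "(if a = i \<and> b = c \<and> d = k then 1 else 0) = (\<Sum>l<r. w l i k * u l a b * v l c d)"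
    if lt: "a < N" "b < N" "c < N" "d < N" "i < N" "k < N" for a b c d i k
  proof -
    \<comment> \<open>Feed the algorithm the matrix units \<open>E\<^sub>a\<^sub>b\<close> and \<open>E\<^sub>c\<^sub>d\<close>.\<close>
    define X :: "nat \<Rightarrow> nat \<Rightarrow> complex" where "X = (\<lambda>x y. if x = a \<and> y = b then 1 else 0)"
    define Y :: "nat \<Rightarrow> nat \<Rightarrow> complex" where "Y = (\<lambda>x y. if x = c \<and> y = d then 1 else 0)"
    have "X i j * Y j k = (if j = b then (if a = i \<and> b = c \<and> d = k then 1 else 0) else 0)" for j
      unfolding X_def Y_def by auto
    then have "(\<Sum>j<N. X i j * Y j k) = (if a = i \<and> b = c \<and> d = k then 1 else 0)"
      using lt by (simp add: sum.delta)
    moreover have "(\<Sum>x<N. \<Sum>y<N. u l x y * X x y) = u l a b"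
      and "(\<Sum>x<N. \<Sum>y<N. v l x y * Y x y) = v l c d" for l
      unfolding X_def Y_def using lt by (simp_all only: sum_sum_mult_indicator)
    ultimately show ?thesis
      using algo[OF lt(5,6), of X Y] by simp
  qed
  then show ?thesis
    unfolding mm_rank_le_def by (intro exI[of _ u] exI[of _ v] exI[of _ w] allI impI)
qed

lemma bilinear_mm_algo_if_mm_rank_le:
  assumes "mm_rank_le N r"
  shows "bilinear_mm_algo N r"
proof -
  obtain u v w :: "nat \<Rightarrow> nat \<Rightarrow> nat \<Rightarrow> complex" where decomp:
    "\<forall>a<N. \<forall>b<N. \<forall>c<N. \<forall>d<N. \<forall>i<N. \<forall>k<N.
       (if a = i \<and> b = c \<and> d = k then 1 else 0) = (\<Sum>l<r. w l i k * u l a b * v l c d)"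
    using assms unfolding mm_rank_le_def by blast
  have "(\<Sum>j<N. X i j * Y j k) =
      (\<Sum>l<r. w l i k * (\<Sum>a<N. \<Sum>b<N. u l a b * X a b) * (\<Sum>c<N. \<Sum>d<N. v l c d * Y c d))"
    if ik: "i < N" "k < N" for X Y :: "nat \<Rightarrow> nat \<Rightarrow> complex" and i k
  proof -
    have "(\<Sum>l<r. w l i k * (\<Sum>a<N. \<Sum>b<N. u l a b * X a b) * (\<Sum>c<N. \<Sum>d<N. v l c d * Y c d))
        = (\<Sum>a<N. \<Sum>b<N. \<Sum>c<N. \<Sum>d<N. X a b * Y c d * (\<Sum>l<r. w l i k * u l a b * v l c d))"
      by (simp add: sum_distrib_left sum_distrib_right mult_ac sum.swap[of _ "{..<r}"])
    also have "\<dots> = (\<Sum>a<N. \<Sum>b<N. \<Sum>c<N. \<Sum>d<N.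
        if d = k then if c = b then if a = i then X a b * Y c d else 0 else 0 else 0)"
      using ik by (intro sum.cong refl) (simp add: decomp[rule_format, symmetric])
    also have "\<dots> = (\<Sum>j<N. X i j * Y j k)"
      using ik by (simp add: sum.delta cong: if_cong) (subst sum.swap, simp)
    finally show ?thesis ..
  qed
  then show ?thesis
    unfolding bilinear_mm_algo_def by (intro exI[of _ u] exI[of _ v] exI[of _ w] allI impI)
qed

lemma bilinear_mm_algo_iff_mm_rank_le: "bilinear_mm_algo N r \<longleftrightarrow> mm_rank_le N r"
  using bilinear_mm_algo_if_mm_rank_le mm_rank_le_if_bilinear_mm_algo by blast

lemma mm_rank_le_mono:
  assumes "mm_rank_le N r" "M \<le> N" "r \<le> r'"
  shows "mm_rank_le M r'"
proof -
  obtain u v w :: "nat \<Rightarrow> nat \<Rightarrow> nat \<Rightarrow> complex" where decomp: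
    "\<forall>a<N. \<forall>b<N. \<forall>c<N. \<forall>d<N. \<forall>i<N. \<forall>k<N.
       (if a = i \<and> b = c \<and> d = k then 1 else 0) = (\<Sum>l<r. w l i k * u l a b * v l c d)"
    using assms(1) unfolding mm_rank_le_def by blast
  define w' where "w' = (\<lambda>l. if l < r then w l else (\<lambda>_ _. 0))"
  have "(\<Sum>l<r'. w' l i k * u l a b * v l c d) = (\<Sum>l<r. w l i k * u l a b * v l c d)" for a b c d i k
  proof -
    have "(\<Sum>l<r'. w' l i k * u l a b * v l c d) = (\<Sum>l\<in>{..<r'} \<inter> {l. l < r}. w l i k * u l a b * v l c d)"
      unfolding w'_def by (simp add: sum.If_cases if_distrib[of "\<lambda>f. f i k * _ * _"])
    also have "{..<r'} \<inter> {l. l < r} = {..<r}"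
      using assms(3) by auto
    finally show ?thesis .
  qed
  with decomp assms(2) have "\<forall>a<M. \<forall>b<M. \<forall>c<M. \<forall>d<M. \<forall>i<M. \<forall>k<M.
       (if a = i \<and> b = c \<and> d = k then 1 else 0) = (\<Sum>l<r'. w' l i k * u l a b * v l c d)"
    by simp
  then show ?thesis
    unfolding mm_rank_le_def by (intro exI[of _ u] exI[of _ v] exI[of _ w'])
qed

lemma not_mm_rank_le_2_1: "\<not> mm_rank_le 2 1"
proof
  assume "mm_rank_le 2 1"
  then obtain u v w :: "nat \<Rightarrow> nat \<Rightarrow> nat \<Rightarrow> complex" where decomp:
    "\<forall>a<2. \<forall>b<2. \<forall>c<2. \<forall>d<2. \<forall>i<2. \<forall>k<2.
       (if a = i \<and> b = c \<and> d = k then 1 else 0) = (\<Sum>l<1. w l i k * u l a b * v l c d)"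
    unfolding mm_rank_le_def by blast
  \<comment> \<open>The first two equations make \<open>u 0 0 0\<close> and \<open>v 0 1 0\<close> nonzero, contradicting the third.\<close>
  have "w 0 0 0 * u 0 0 0 * v 0 0 0 = 1" using decomp[rule_format, of 0 0 0 0 0 0] by simp
  moreover have "w 0 0 0 * u 0 0 1 * v 0 1 0 = 1" using decomp[rule_format, of 0 1 1 0 0 0] by simp
  moreover have "w 0 0 0 * u 0 0 0 * v 0 1 0 = 0" using decomp[rule_format, of 0 0 1 0 0 0] by simp
  ultimately show False by auto
qed

lemma mm_rank_ge_2:
  assumes "mm_rank_le N r" "2 \<le> N"
  shows "2 \<le> r"
  using mm_rank_le_mono[OF assms(1,2), of 1] not_mm_rank_le_2_1 by linarith

subsection \<open>Qubit strings as binary numerals\<close>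

fun bits :: "nat \<Rightarrow> nat \<Rightarrow> nat list" where
  "bits 0 k = []"
| "bits (Suc n) k = k mod 2 # bits n (k div 2)"

fun nat_of_bits :: "nat list \<Rightarrow> nat" where
  "nat_of_bits [] = 0"
| "nat_of_bits (x # xs) = x + 2 * nat_of_bits xs"

lemma length_bits [simp]: "length (bits n k) = n"
  by (induction n arbitrary: k) auto

lemma set_bits_subset: "set (bits n k) \<subseteq> qubit"
  by (induction n arbitrary: k) (auto simp: qubit_def)

lemma bits_in_pow_idx: "bits n k \<in> pow_idx qubit n"
  using set_bits_subset by (auto simp: pow_idx_def)

lemma nat_of_bits_less: "xs \<in> pow_idx qubit n \<Longrightarrow> nat_of_bits xs < 2 ^ n"
proof -
  have "set xs \<subseteq> qubit \<Longrightarrow> nat_of_bits xs < 2 ^ length xs" for xs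
    by (induction xs) (auto simp: qubit_def)
  then show "xs \<in> pow_idx qubit n \<Longrightarrow> nat_of_bits xs < 2 ^ n"
    by (auto simp: pow_idx_def)
qed

lemma nat_of_bits_bits: "k < 2 ^ n \<Longrightarrow> nat_of_bits (bits n k) = k"
  by (induction n arbitrary: k) auto

lemma bits_nat_of_bits: "xs \<in> pow_idx qubit n \<Longrightarrow> bits n (nat_of_bits xs) = xs"
proof -
  have "set xs \<subseteq> qubit \<Longrightarrow> bits (length xs) (nat_of_bits xs) = xs" for xs
    by (induction xs) (auto simp: qubit_def)
  then show "xs \<in> pow_idx qubit n \<Longrightarrow> bits n (nat_of_bits xs) = xs"
    by (auto simp: pow_idx_def)
qed

lemma bits_eq_iff: "a < 2 ^ n \<Longrightarrow> b < 2 ^ n \<Longrightarrow> bits n a = bits n b \<longleftrightarrow> a = b"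
  by (metis nat_of_bits_bits)

lemma nat_of_bits_eq_iff:
  "xs \<in> pow_idx qubit n \<Longrightarrow> ys \<in> pow_idx qubit n \<Longrightarrow> nat_of_bits xs = nat_of_bits ys \<longleftrightarrow> xs = ys"
  by (metis bits_nat_of_bits)

lemma bij_betw_bits: "bij_betw (bits n) {..<2 ^ n} (pow_idx qubit n)"
  by (rule bij_betw_byWitness[where f' = nat_of_bits])
    (auto simp: nat_of_bits_bits bits_nat_of_bits bits_in_pow_idx nat_of_bits_less)

lemma sum_pow_idx_qubit: "(\<Sum>xs\<in>pow_idx qubit n. g xs) = (\<Sum>k<2 ^ n. g (bits n k))"
  using sum.reindex_bij_betw[OF bij_betw_bits, of g n] by simp

lemma finite_pow_idx_qubit: "finite (pow_idx qubit n)"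
  using bij_betw_finite[OF bij_betw_bits] by blast

lemma zip_bits_in_pow_idx: "zip (bits n p) (bits n q) \<in> pow_idx (qubit \<times> qubit) n"
proof -
  have "set (zip (bits n p) (bits n q)) \<subseteq> set (bits n p) \<times> set (bits n q)"
    by (auto dest: set_zip_leftD set_zip_rightD)
  then show ?thesis
    using set_bits_subset[of n p] set_bits_subset[of n q] by (auto simp: pow_idx_def)
qed

lemma GHZ_000_nonzero: "GHZ 0 0 0 \<noteq> 0"
  by (simp add: GHZ_def)

lemma tpow_GHZ:
  assumes "a \<in> pow_idx qubit m" "b \<in> pow_idx qubit m" "c \<in> pow_idx qubit m"
  shows "tpow GHZ m a b c = (if a = b \<and> b = c then GHZ 0 0 0 ^ m else 0)"
proof (cases "a = b \<and> b = c")
  case True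
  then show ?thesis by (simp add: tpow_def GHZ_def)
next
  case False
  have "length a = m" "length b = m" "length c = m"
    using assms by (auto simp: pow_idx_def)
  then obtain i where i: "i < m" "a ! i \<noteq> b ! i \<or> b ! i \<noteq> c ! i"
    using False nth_equalityI by metis
  then have "GHZ (a ! i) (b ! i) (c ! i) = 0"
    by (auto simp: GHZ_def)
  with i(1) have "tpow GHZ m a b c = 0"
    unfolding tpow_def by (intro prod_zero) auto
  with False show ?thesis
    by (simp only: if_False)
qed

lemma sum_tpow_GHZ:
  fixes f g h :: "nat list \<Rightarrow> complex"
  shows "(\<Sum>a\<in>pow_idx qubit m. \<Sum>b\<in>pow_idx qubit m. \<Sum>c\<in>pow_idx qubit m.
            f a * g b * h c * tpow GHZ m a b c) =
         GHZ 0 0 0 ^ m * (\<Sum>l<2 ^ m. f (bits m l) * g (bits m l) * h (bits m l))"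
proof -
  let ?P = "pow_idx qubit m"
  have "(\<Sum>a\<in>?P. \<Sum>b\<in>?P. \<Sum>c\<in>?P. f a * g b * h c * tpow GHZ m a b c)
      = (\<Sum>a\<in>?P. \<Sum>b\<in>?P. \<Sum>c\<in>?P.
           if c = a then if b = a then GHZ 0 0 0 ^ m * (f a * g a * h a) else 0 else 0)"
    by (intro sum.cong refl) (auto simp: tpow_GHZ)
  also have "\<dots> = (\<Sum>a\<in>?P. GHZ 0 0 0 ^ m * (f a * g a * h a))"
    using finite_pow_idx_qubit by (simp add: sum.delta)
  also have "\<dots> = GHZ 0 0 0 ^ m * (\<Sum>l<2 ^ m. f (bits m l) * g (bits m l) * h (bits m l))"
    by (simp add: sum_distrib_left[symmetric] sum_pow_idx_qubit)
  finally show ?thesis .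
qed

lemma tpow_Phi3:
  assumes "length x = n" "length y = n" "length z = n"
  shows "tpow Phi3 n x y z =
    (if map fst x = map fst y \<and> map snd x = map fst z \<and> map snd y = map snd z then 1 else 0)"
proof (cases "map fst x = map fst y \<and> map snd x = map fst z \<and> map snd y = map snd z")
  case True
  then have "\<forall>i<n. Phi3 (x ! i) (y ! i) (z ! i) = 1"
    using assms by (auto simp: Phi3_def) (metis nth_map)+
  with True show ?thesis
    by (simp add: tpow_def)
next
  case False
  then obtain i where i: "i < n"
    "fst (x ! i) \<noteq> fst (y ! i) \<or> snd (x ! i) \<noteq> fst (z ! i) \<or> snd (y ! i) \<noteq> snd (z ! i)"
    using assms by (metis (no_types, lifting) length_map nth_equalityI nth_map)
  then have "Phi3 (x ! i) (y ! i) (z ! i) = 0"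
    by (auto simp: Phi3_def)
  with i(1) have "tpow Phi3 n x y z = 0"
    unfolding tpow_def by (intro prod_zero) auto
  with False show ?thesis
    by (simp only: if_False)
qed

subsection \<open>SLOCC conversion as a rank bound\<close>

lemma mm_rank_le_if_GHZ_pow_to_Phi3_pow:
  assumes "GHZ_pow_to_Phi3_pow m n"
  shows "mm_rank_le (2 ^ n) (2 ^ m)"
proof -
  obtain MA MB MC s where s: "s \<noteq> 0" and conv:
    "\<forall>x\<in>pow_idx (qubit \<times> qubit) n. \<forall>y\<in>pow_idx (qubit \<times> qubit) n. \<forall>z\<in>pow_idx (qubit \<times> qubit) n.
       (\<Sum>a\<in>pow_idx qubit m. \<Sum>b\<in>pow_idx qubit m. \<Sum>c\<in>pow_idx qubit m.
          MA x a * MB y b * MC z c * tpow GHZ m a b c) = s * tpow Phi3 n x y z"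
    using assms unfolding GHZ_pow_to_Phi3_pow_def slocc_def by blast
  define A where "A a b = zip (bits n b) (bits n a)" for a b
  define B where "B c d = zip (bits n c) (bits n d)" for c d
  define C where "C i k = zip (bits n i) (bits n k)" for i k
  define u where "u l a b = GHZ 0 0 0 ^ m / s * MA (A a b) (bits m l)" for l a b
  define v where "v l c d = MB (B c d) (bits m l)" for l c d
  define w where "w l i k = MC (C i k) (bits m l)" for l i k
  have "(if a = i \<and> b = c \<and> d = k then 1 else 0) = (\<Sum>l<2 ^ m. w l i k * u l a b * v l c d)"
    if lt: "a < 2 ^ n" "b < 2 ^ n" "c < 2 ^ n" "d < 2 ^ n" "i < 2 ^ n" "k < 2 ^ n" for a b c d i k
  proof -
    have "s * tpow Phi3 n (A a b) (B c d) (C i k) =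
       GHZ 0 0 0 ^ m * (\<Sum>l<2 ^ m. MA (A a b) (bits m l) * MB (B c d) (bits m l) * MC (C i k) (bits m l))"
      using conv[unfolded Ball_def, rule_format, of "A a b" "B c d" "C i k"]
      by (simp add: A_def B_def C_def zip_bits_in_pow_idx sum_tpow_GHZ)
    moreover have "tpow Phi3 n (A a b) (B c d) (C i k) = (if a = i \<and> b = c \<and> d = k then 1 else 0)"
      using bits_eq_iff[OF lt(2,3)] bits_eq_iff[OF lt(1,5)] bits_eq_iff[OF lt(4,6)]
      unfolding A_def B_def C_def by (subst tpow_Phi3) auto
    ultimately have "(if a = i \<and> b = c \<and> d = k then 1 else 0) = GHZ 0 0 0 ^ m / s *
        (\<Sum>l<2 ^ m. MA (A a b) (bits m l) * MB (B c d) (bits m l) * MC (C i k) (bits m l))"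
      using s by (simp add: field_simps)
    also have "\<dots> = (\<Sum>l<2 ^ m. w l i k * u l a b * v l c d)"
      by (simp add: sum_distrib_left u_def v_def w_def mult_ac)
    finally show ?thesis .
  qed
  then show ?thesis
    unfolding mm_rank_le_def by (intro exI[of _ u] exI[of _ v] exI[of _ w] allI impI)
qed

lemma GHZ_pow_to_Phi3_pow_if_mm_rank_le:
  assumes "mm_rank_le (2 ^ n) (2 ^ m)"
  shows "GHZ_pow_to_Phi3_pow m n"
proof -
  obtain u v w :: "nat \<Rightarrow> nat \<Rightarrow> nat \<Rightarrow> complex" where decomp:
    "\<forall>a<2 ^ n. \<forall>b<2 ^ n. \<forall>c<2 ^ n. \<forall>d<2 ^ n. \<forall>i<2 ^ n. \<forall>k<2 ^ n.
       (if a = i \<and> b = c \<and> d = k then 1 else 0) = (\<Sum>l<2 ^ m. w l i k * u l a b * v l c d)"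
    using assms unfolding mm_rank_le_def by blast
  define MA where "MA x \<alpha> = u (nat_of_bits \<alpha>) (nat_of_bits (map snd x)) (nat_of_bits (map fst x))"
    for x \<alpha>
  define MB where "MB y \<alpha> = v (nat_of_bits \<alpha>) (nat_of_bits (map fst y)) (nat_of_bits (map snd y))"
    for y \<alpha>
  define MC where "MC z \<alpha> = w (nat_of_bits \<alpha>) (nat_of_bits (map fst z)) (nat_of_bits (map snd z))"
    for z \<alpha>
  have "(\<Sum>\<alpha>\<in>pow_idx qubit m. \<Sum>\<beta>\<in>pow_idx qubit m. \<Sum>\<gamma>\<in>pow_idx qubit m.
          MA x \<alpha> * MB y \<beta> * MC z \<gamma> * tpow GHZ m \<alpha> \<beta> \<gamma>) = GHZ 0 0 0 ^ m * tpow Phi3 n x y z"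
    if xyz: "x \<in> pow_idx (qubit \<times> qubit) n" "y \<in> pow_idx (qubit \<times> qubit) n"
      "z \<in> pow_idx (qubit \<times> qubit) n" for x y z
  proof -
    have halves: "map fst p \<in> pow_idx qubit n" "map snd p \<in> pow_idx qubit n"
      if "p \<in> pow_idx (qubit \<times> qubit) n" for p
      using that by (auto simp: pow_idx_def)
    let ?a = "nat_of_bits (map snd x)" and ?b = "nat_of_bits (map fst x)"
      and ?c = "nat_of_bits (map fst y)" and ?d = "nat_of_bits (map snd y)"
      and ?i = "nat_of_bits (map fst z)" and ?k = "nat_of_bits (map snd z)"
    have lts: "?a < 2 ^ n" "?b < 2 ^ n" "?c < 2 ^ n" "?d < 2 ^ n" "?i < 2 ^ n" "?k < 2 ^ n"
      using halves xyz nat_of_bits_less by blast+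
    have "tpow Phi3 n x y z = (if ?a = ?i \<and> ?b = ?c \<and> ?d = ?k then 1 else 0)"
      using xyz nat_of_bits_eq_iff[OF halves(2)[OF xyz(1)] halves(1)[OF xyz(3)]]
        nat_of_bits_eq_iff[OF halves(1)[OF xyz(1)] halves(1)[OF xyz(2)]]
        nat_of_bits_eq_iff[OF halves(2)[OF xyz(2)] halves(2)[OF xyz(3)]]
      by (subst tpow_Phi3) (auto simp: pow_idx_def)
    also have "\<dots> = (\<Sum>l<2 ^ m. w l ?i ?k * u l ?a ?b * v l ?c ?d)"
      by (rule decomp[rule_format, OF lts])
    also have "\<dots> = (\<Sum>l<2 ^ m. MA x (bits m l) * MB y (bits m l) * MC z (bits m l))"
      by (intro sum.cong refl) (simp add: MA_def MB_def MC_def nat_of_bits_bits)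
    finally show ?thesis
      by (simp add: sum_tpow_GHZ)
  qed
  then show ?thesis
    using GHZ_000_nonzero unfolding GHZ_pow_to_Phi3_pow_def slocc_def
    by (intro exI[of _ MA] exI[of _ MB] exI[of _ MC] exI[of _ "GHZ 0 0 0 ^ m"]) simp
qed

lemma GHZ_pow_to_Phi3_pow_iff_mm_rank_le:
  "GHZ_pow_to_Phi3_pow m n \<longleftrightarrow> mm_rank_le (2 ^ n) (2 ^ m)"
  using GHZ_pow_to_Phi3_pow_if_mm_rank_le mm_rank_le_if_GHZ_pow_to_Phi3_pow by blast

definition ghz_rate_achievable :: "real \<Rightarrow> bool" where
  "ghz_rate_achievable u \<longleftrightarrow> (\<exists>N0. \<forall>n\<ge>N0. GHZ_pow_to_Phi3_pow (nat \<lfloor>u * real n\<rfloor>) n)"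

definition mm_exponent_bound :: "real \<Rightarrow> bool" where
  "mm_exponent_bound \<tau> \<longleftrightarrow> (\<exists>C N0. \<forall>N\<ge>N0. \<exists>r. mm_rank_le N r \<and> real r \<le> C * real N powr \<tau>)"

lemma lambda_GHZ_eq_Inf: "lambda_GHZ = Inf (Collect ghz_rate_achievable)"
  unfolding lambda_GHZ_def ghz_rate_achievable_def[abs_def] ..

lemma omega_mm_eq_Inf: "omega_mm = Inf (Collect mm_exponent_bound)"
  unfolding omega_mm_def mm_exponent_bound_def[abs_def] bilinear_mm_algo_iff_mm_rank_le ..

lemma mm_exponent_bound_nonneg:
  assumes "mm_exponent_bound \<tau>"
  shows "0 \<le> \<tau>"
proof (rule ccontr)
  assume "\<not> 0 \<le> \<tau>"
  obtain C N0 where bound: "\<forall>N\<ge>N0. \<exists>r. mm_rank_le N r \<and> real r \<le> C * real N powr \<tau>"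
    using assms unfolding mm_exponent_bound_def by blast
  from \<open>\<not> 0 \<le> \<tau>\<close> have "((\<lambda>N. C * real N powr \<tau>) \<longlongrightarrow> 0) sequentially"
    by (intro tendsto_mult_right_zero tendsto_neg_powr filterlim_real_sequentially) auto
  then have "eventually (\<lambda>N. C * real N powr \<tau> < 2 \<and> max N0 2 \<le> N) sequentially"
    by (intro eventually_conj order_tendstoD(2) eventually_ge_at_top) auto
  then obtain N where N: "C * real N powr \<tau> < 2" "max N0 2 \<le> N"
    using eventually_sequentially by auto
  then obtain r where "mm_rank_le N r" "real r < 2"
    using bound by force
  then show False
    using mm_rank_ge_2 N(2) by fastforce
qed

lemma ghz_rate_achievable_nonneg:
  assumes "ghz_rate_achievable u"
  shows "0 \<le> u"
proof (rule ccontr)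
  assume "\<not> 0 \<le> u"
  obtain N0 where conv: "\<forall>n\<ge>N0. mm_rank_le (2 ^ n) (2 ^ nat \<lfloor>u * real n\<rfloor>)"
    using assms unfolding ghz_rate_achievable_def GHZ_pow_to_Phi3_pow_iff_mm_rank_le by blast
  define n where "n = max N0 1"
  from \<open>\<not> 0 \<le> u\<close> have "u * real n \<le> 0"
    by (intro mult_nonpos_nonneg) auto
  then have "nat \<lfloor>u * real n\<rfloor> = 0"
    by linarith
  then have "mm_rank_le (2 ^ n) 1"
    using conv n_def by (metis max.cobounded1 power_0)
  moreover have "(2::nat) \<le> 2 ^ n"
    using power_increasing[of 1 n "2::nat"] n_def by simp
  ultimately show False
    using mm_rank_ge_2 by fastforce
qed

lemma mm_exponent_bound_if_ghz_rate_achievable: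
  assumes "ghz_rate_achievable u"
  shows "mm_exponent_bound u"
proof -
  obtain N0 where conv: "\<forall>n\<ge>N0. mm_rank_le (2 ^ n) (2 ^ nat \<lfloor>u * real n\<rfloor>)"
    using assms unfolding ghz_rate_achievable_def GHZ_pow_to_Phi3_pow_iff_mm_rank_le by blast
  have "u \<ge> 0"
    using assms by (rule ghz_rate_achievable_nonneg)
  have "\<exists>r. mm_rank_le N r \<and> real r \<le> 2 powr u * real N powr u" if N: "max 2 (2 ^ N0) \<le> N" for N
  proof -
    \<comment> \<open>Embed the N \<times> N problem into the next power of two.\<close>
    obtain p where "2 ^ p < N" "N \<le> 2 ^ Suc p"
      using ex_power_ivl2[of 2 N] N by auto
    then obtain q where q: "N \<le> 2 ^ q" "2 ^ q < 2 * N"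
      by (intro that[of "Suc p"]) auto
    have "(2::nat) ^ N0 \<le> 2 ^ q"
      using N q(1) by linarith
    then have "N0 \<le> q"
      by (simp add: power_le_imp_le_exp)
    define m where "m = nat \<lfloor>u * real q\<rfloor>"
    have "mm_rank_le N (2 ^ m)"
      using conv \<open>N0 \<le> q\<close> q(1) mm_rank_le_mono unfolding m_def by blast
    moreover have "real (2 ^ m) \<le> 2 powr u * real N powr u"
    proof -
      have "real (2 ^ m) = 2 powr real m"
        by (simp add: powr_realpow)
      also have "\<dots> \<le> 2 powr (u * real q)"
        using \<open>u \<ge> 0\<close> by (intro powr_mono) (auto simp: m_def)
      also have "\<dots> = real (2 ^ q) powr u"
        by (simp add: powr_powr powr_realpow[symmetric] mult.commute)
      also have "\<dots> \<le> real (2 * N) powr u"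
        using q(2) \<open>u \<ge> 0\<close> by (intro powr_mono2 of_nat_mono) auto
      also have "\<dots> = 2 powr u * real N powr u"
        by (simp add: powr_mult)
      finally show ?thesis .
    qed
    ultimately show ?thesis
      by blast
  qed
  then show ?thesis
    unfolding mm_exponent_bound_def by blast
qed

lemma ghz_rate_achievable_if_mm_exponent_bound:
  assumes "mm_exponent_bound \<tau>" "\<epsilon> > 0"
  shows "ghz_rate_achievable (\<tau> + \<epsilon>)"
proof -
  obtain C N0 where bound: "\<forall>N\<ge>N0. \<exists>r. mm_rank_le N r \<and> real r \<le> C * real N powr \<tau>"
    using assms(1) unfolding mm_exponent_bound_def by blast
  \<comment> \<open>The extra \<open>\<epsilon> n\<close> absorbs both the constant C and the rounding of \<open>(\<tau> + \<epsilon>) n\<close>.\<close>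
  have "filterlim (\<lambda>n. (\<epsilon> * ln 2) * real n) at_top sequentially"
    using assms(2) by (intro filterlim_tendsto_pos_mult_at_top[OF tendsto_const] filterlim_real_sequentially) auto
  then have "filterlim (\<lambda>n. 2 powr (\<epsilon> * real n)) at_top sequentially"
    unfolding powr_def by (auto intro: filterlim_compose[OF exp_at_top] simp: mult_ac)
  then have "eventually (\<lambda>n. 2 * C \<le> 2 powr (\<epsilon> * real n)) sequentially"
    by (simp add: filterlim_at_top)
  then obtain N1 where N1: "\<And>n. n \<ge> N1 \<Longrightarrow> 2 * C \<le> 2 powr (\<epsilon> * real n)"
    using eventually_sequentially by auto
  have "mm_rank_le (2 ^ n) (2 ^ nat \<lfloor>(\<tau> + \<epsilon>) * real n\<rfloor>)" if n: "max N0 N1 \<le> n" for n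
  proof -
    have "N0 \<le> 2 ^ n"
      using n less_exp[of n] by linarith
    then obtain r where r: "mm_rank_le (2 ^ n) r" "real r \<le> C * real (2 ^ n) powr \<tau>"
      using bound by blast
    define m where "m = nat \<lfloor>(\<tau> + \<epsilon>) * real n\<rfloor>"
    have "real r \<le> C * 2 powr (\<tau> * real n)"
      using r(2) by (simp add: powr_powr powr_realpow[symmetric] mult.commute)
    also have "\<dots> \<le> 2 powr (\<epsilon> * real n) / 2 * 2 powr (\<tau> * real n)"
      using N1[of n] n by (intro mult_right_mono) (simp_all add: mult.commute)
    also have "\<dots> = 2 powr ((\<tau> + \<epsilon>) * real n - 1)"
      by (simp add: powr_diff powr_add algebra_simps)
    also have "\<dots> \<le> 2 powr real m"
      unfolding m_def by (intro powr_mono) linarith+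
    also have "\<dots> = real (2 ^ m)"
      by (simp add: powr_realpow)
    finally have "r \<le> 2 ^ m"
      by linarith
    then show ?thesis
      using r(1) mm_rank_le_mono unfolding m_def by blast
  qed
  then show ?thesis
    unfolding ghz_rate_achievable_def GHZ_pow_to_Phi3_pow_iff_mm_rank_le by blast
qed

lemma Inf_eq_if_subset_approximates:
  fixes A B :: "real set"
  assumes "A \<subseteq> B" "bdd_below B" "\<And>b \<epsilon>. b \<in> B \<Longrightarrow> \<epsilon> > 0 \<Longrightarrow> b + \<epsilon> \<in> A"
  shows "Inf A = Inf B"
proof (cases "B = {}")
  case True
  with assms(1) show ?thesis
    by simp
next
  case False
  then have "A \<noteq> {}"
    using assms(3)[of _ 1] by auto
  have "bdd_below A"
    using assms(2,1) by (rule bdd_below_mono)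
  have "Inf A \<le> b" if "b \<in> B" for b
  proof (rule field_le_epsilon)
    fix \<epsilon> :: real
    assume "\<epsilon> > 0"
    then show "Inf A \<le> b + \<epsilon>"
      using cInf_lower[OF assms(3)[OF that] \<open>bdd_below A\<close>] by simp
  qed
  then have "Inf A \<le> Inf B"
    using False by (intro cInf_greatest) auto
  moreover have "Inf B \<le> Inf A"
    using \<open>A \<noteq> {}\<close> assms(2,1) by (rule cInf_superset_mono)
  ultimately show ?thesis
    by linarith
qed

theorem theorem1:
  shows "lambda_GHZ = omega_mm"
  unfolding lambda_GHZ_eq_Inf omega_mm_eq_Inf
proof (rule Inf_eq_if_subset_approximates)
  show "Collect ghz_rate_achievable \<subseteq> Collect mm_exponent_bound"
    using mm_exponent_bound_if_ghz_rate_achievable by blast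
  show "bdd_below (Collect mm_exponent_bound)"
    using mm_exponent_bound_nonneg by (auto simp: bdd_below_def)
  show "\<tau> + \<epsilon> \<in> Collect ghz_rate_achievable"
    if "\<tau> \<in> Collect mm_exponent_bound" "\<epsilon> > 0" for \<tau> \<epsilon> :: real
    using that ghz_rate_achievable_if_mm_exponent_bound by blast
qed

end
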